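(* All walls that appear in diagonal or nearly diagonal wall crossings are simple.
   Context: Let $X$ be a smooth connected projective curve of genus $g \ge 2$ over $\mathbb{C}$, let $r, d$ be positive integers with $\gcd(r,d)=1$ and $0<d<r$, and fix a line bundle $L$ of degree $d$ on $X$. Fix two distinct points $x_1, x_2 \in X$. A parabolic bundle $(E, V_1, V_2)$ consists of a rank $r$ vector bundle $E$ with $\det E \cong L$ and subspaces $V_i \subset E|_{x_i}$ of dimensions $\mathbf{m} = (m_1,m_2) = (r-1, 1)$. For a weight $\mathbf{a} = (a_1,a_2) \in (0,1)^2$, $(E,V_\bullet)$ is $\mathbf{a}$-(semi)stable if for every proper subbundle $F\subset E$ of rank $s$ and degree $e$, $\frac{e + \sum_i a_i \dim(V_i\cap F|_{x_i})}{s} < (\le) \frac{d + \sum_i a_i \dim V_i}{r}$; let $\mathrm{M}(r,L,\mathbf{a})$ denote the moduli space. A wall in $[0,1]^2$ is a set $\Delta(s,e,\mathbf{n}) = \{\mathbf{a} \mid (e + n_1a_1+n_2a_2)/s = (d+(r-1)a_1+a_2)/r\}$ with integers $0<s<r$, $e$, $r-2\le n_1\le r-1$, $0\le n_2\le 1$ (across which stability changes); note $\Delta(s,e,\mathbf{n}) = \Delta(r-s,d-e,\mathbf{m}-\mathbf{n})$. A wall is called simple if the greatest common divisor of $\{s,e,n_1,n_2\}$ and that of $\{r-s, d-e, m_1-n_1, m_2-n_2\}$ are both one; otherwise (if a common divisor $c>1$ exists) it is a multiple wall. A wall crossing is diagonal if the wall is crossed while the weight $\mathbf{a}$ increases along the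 line $a_1=a_2$, and nearly diagonal if it is crossed while $\mathbf{a}$ increases along the line $r a_1 = (r+1) a_2$. *)

theory Defs
  imports Main Complex_Main
begin

text \<open>Parabolic data: rank r, degree d, flag dimensions m = (r-1, 1) at two points.
  A wall Delta(s,e,n) is the set of weights a = (a1,a2) with
  (e + n1 a1 + n2 a2)/s = (d + (r-1) a1 + a2)/r.\<close>

definition wall :: "nat \<Rightarrow> nat \<Rightarrow> nat \<Rightarrow> int \<Rightarrow> nat \<Rightarrow> nat \<Rightarrow> (real \<times> real) set" where
  "wall r d s e n1 n2 =
     {(a1, a2). (real_of_int e + real n1 * a1 + real n2 * a2) / real s
              = (real d + real (r - 1) * a1 + a2) / real r}"

text \<open>Admissible numerical data for a wall: 0 < s < r, 0 <= n_i <= m_i, and the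
  dimension constraints n_i <= s (intersection lies in F) and m_i - n_i <= r - s
  (complementary constraint), i.e. max(0, s+m_i-r) <= n_i <= min(s, m_i).\<close>

definition wall_data :: "nat \<Rightarrow> nat \<Rightarrow> nat \<Rightarrow> nat \<Rightarrow> bool" where
  "wall_data r s n1 n2 \<longleftrightarrow>
     0 < s \<and> s < r \<and> n1 \<le> r - 1 \<and> n2 \<le> 1 \<and>
     n1 \<le> s \<and> n2 \<le> s \<and> (r - 1) - n1 \<le> r - s \<and> 1 - n2 \<le> r - s"

definition simple_wall :: "nat \<Rightarrow> nat \<Rightarrow> nat \<Rightarrow> int \<Rightarrow> nat \<Rightarrow> nat \<Rightarrow> bool" where
  "simple_wall r d s e n1 n2 \<longleftrightarrow>
     Gcd {int s, e, int n1, int n2} = 1 \<and>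
     Gcd {int (r - s), int d - e, int ((r - 1) - n1), int (1 - n2)} = 1"

definition diagonal_crossing :: "nat \<Rightarrow> nat \<Rightarrow> nat \<Rightarrow> int \<Rightarrow> nat \<Rightarrow> nat \<Rightarrow> bool" where
  "diagonal_crossing r d s e n1 n2 \<longleftrightarrow>
     (\<exists>t::real. 0 < t \<and> t < 1 \<and> (t, t) \<in> wall r d s e n1 n2)"

definition nearly_diagonal_crossing :: "nat \<Rightarrow> nat \<Rightarrow> nat \<Rightarrow> int \<Rightarrow> nat \<Rightarrow> nat \<Rightarrow> bool" where
  "nearly_diagonal_crossing r d s e n1 n2 \<longleftrightarrow>
     (\<exists>a1 a2::real. 0 < a1 \<and> a1 < 1 \<and> 0 < a2 \<and> a2 < 1 \<and>
        real r * a1 = real (r + 1) * a2 \<and> (a1, a2) \<in> wall r d s e n1 n2)"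

end

theory Submission
  imports Defs
begin

text \<open>The admissibility constraints force \<open>n\<^sub>1 \<in> {s - 1, s}\<close> and \<open>n\<^sub>2 \<in> {0, 1}\<close>. For
  \<open>n = (s, 1)\<close> and \<open>n = (s - 1, 0)\<close> each of the two gcds involves two consecutive integers or
  the entry 1, so the wall is simple whatever \<open>e\<close> is. For \<open>n = (s, 0)\<close> the wall equation reads
  \<open>r e - s d = s (a\<^sub>2 - a\<^sub>1)\<close>: on the diagonal this would give \<open>d/r = e/s\<close> with \<open>s < r\<close>,
  contradicting \<open>gcd(r, d) = 1\<close>, and on the nearly diagonal line the integer \<open>s d - r e\<close> would
  equal \<open>s a\<^sub>1/(r + 1) \<in> (0, 1)\<close>. The remaining case \<open>n = (s - 1, 1)\<close> is the complementary
  description \<open>\<Delta>(r - s, d - e, m - n)\<close> of a wall of the previous kind.\<close>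

lemma int_mult_neq_if_coprime:
  fixes r d s :: nat and e :: int
  assumes "coprime r d" "0 < s" "s < r"
  shows "int s * int d \<noteq> int r * e"
proof
  assume "int s * int d = int r * e"
  then have "int r dvd int (s * d)" by simp
  then have "r dvd s" using assms(1) by (simp add: coprime_dvd_mult_left_iff)
  then show False using assms(2,3) by (simp add: nat_dvd_not_less)
qed

lemma gcd_succ_self_int: "gcd (k + 1) k = (1 :: int)"
  using gcd_add1[of 1 k] by (simp add: add.commute)

lemma mem_wall_iff:
  assumes "0 < s" "s < r"
  shows "(a\<^sub>1, a\<^sub>2) \<in> wall r d s e n1 n2 \<longleftrightarrow>
    real r * (of_int e + real n1 * a\<^sub>1 + real n2 * a\<^sub>2) = real s * (real d + (real r - 1) * a\<^sub>1 + a\<^sub>2)"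
  using assms by (simp add: wall_def of_nat_diff field_simps)

lemma wall_complement:
  assumes "0 < s" "s < r" "n1 \<le> r - 1" "n2 \<le> 1"
  shows "wall r d s e n1 n2 = wall r d (r - s) (int d - e) (r - 1 - n1) (1 - n2)"
  using assms by (auto simp: mem_wall_iff of_nat_diff algebra_simps)

lemma mem_wall_s_0_iff:
  assumes "0 < s" "s < r"
  shows "(a\<^sub>1, a\<^sub>2) \<in> wall r d s e s 0 \<longleftrightarrow> of_int (int r * e - int s * int d) = real s * (a\<^sub>2 - a\<^sub>1)"
  using assms by (simp add: mem_wall_iff algebra_simps)

lemma not_diagonal_crossing_s_0:
  assumes "coprime r d" "0 < s" "s < r"
  shows "\<not> diagonal_crossing r d s e s 0"
proof
  assume "diagonal_crossing r d s e s 0"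
  then obtain t where "(t, t) \<in> wall r d s e s 0"
    by (auto simp: diagonal_crossing_def)
  then have "of_int (int r * e - int s * int d) = (0 :: real)"
    using mem_wall_s_0_iff[OF assms(2,3)] by (metis diff_self mult_zero_right)
  then have "int r * e - int s * int d = 0"
    by (simp only: of_int_eq_0_iff)
  then show False using int_mult_neq_if_coprime[OF assms, of e] by simp
qed

lemma not_nearly_diagonal_crossing_s_0:
  assumes "0 < s" "s < r"
  shows "\<not> nearly_diagonal_crossing r d s e s 0"
proof
  assume "nearly_diagonal_crossing r d s e s 0"
  then obtain a\<^sub>1 a\<^sub>2 where a\<^sub>1: "0 < a\<^sub>1" "a\<^sub>1 < 1" and line: "real r * a\<^sub>1 = real (r + 1) * a\<^sub>2"
    and eq: "of_int (int r * e - int s * int d) = real s * (a\<^sub>2 - a\<^sub>1)"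
    using assms by (auto simp: nearly_diagonal_crossing_def mem_wall_s_0_iff)
  define X where "X = int s * int d - int r * e"
  have "of_int X = real s * (a\<^sub>1 - a\<^sub>2)"
    using eq by (simp add: X_def algebra_simps)
  also have "(real r + 1) * \<dots> = real s * ((real r + 1) * (a\<^sub>1 - a\<^sub>2))"
    by (simp only: mult.left_commute)
  also have "(real r + 1) * (a\<^sub>1 - a\<^sub>2) = a\<^sub>1"
    using line by (simp add: algebra_simps)
  finally have X: "(real r + 1) * of_int X = real s * a\<^sub>1" .
  have "0 < (real r + 1) * of_int X"
    using X a\<^sub>1 assms(1) by simp
  then have "0 < X" by (simp add: zero_less_mult_iff)
  moreover have "(real r + 1) * of_int X < (real r + 1) * 1"
    using X a\<^sub>1 assms(2) mult_strict_mono[of "real s" "real r + 1" a\<^sub>1 1] by simp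
  then have "X < 1" by (simp only: mult_less_cancel_left_pos of_int_less_1_iff)
  ultimately show False by simp
qed

lemma simple_wall_unless_s_0_or_dual:
  assumes "wall_data r s n1 n2" "\<not> (n1 = s \<and> n2 = 0)" "\<not> (n1 + 1 = s \<and> n2 = 1)"
  shows "simple_wall r d s e n1 n2"
proof -
  have "n1 = s \<and> n2 = 1 \<or> n1 + 1 = s \<and> n2 = 0"
    using assms by (auto simp: wall_data_def)
  then show ?thesis
  proof
    assume "n1 = s \<and> n2 = 1"
    moreover have "gcd (int r - int s) (int r - (1 + int s)) = 1"
      using gcd_succ_self_int[of "int r - (1 + int s)"] by simp
    ultimately show ?thesis using assms(1)
      by (auto simp: simple_wall_def wall_data_def of_nat_diff gcd.left_commute)
  next
    assume "n1 + 1 = s \<and> n2 = 0"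
    moreover have "gcd (int n1 + 1) (int n1) = 1"
      by (rule gcd_succ_self_int)
    ultimately show ?thesis
      by (auto simp: simple_wall_def gcd.left_commute)
  qed
qed

theorem proposition3p1:
  fixes r d s n1 n2 :: nat and e :: int
  assumes "0 < d" and "d < r" and "coprime r d"
    and "wall_data r s n1 n2"
    and "diagonal_crossing r d s e n1 n2 \<or> nearly_diagonal_crossing r d s e n1 n2"
  shows "simple_wall r d s e n1 n2"
proof -
  have s: "0 < s" "s < r" and n: "n1 \<le> r - 1" "n2 \<le> 1"
    using assms(4) by (auto simp: wall_data_def)
  have "\<not> (n1 = s \<and> n2 = 0)"
    using assms(5) not_diagonal_crossing_s_0[OF assms(3) s] not_nearly_diagonal_crossing_s_0[OF s]
    by blast
  moreover have "\<not> (n1 + 1 = s \<and> n2 = 1)"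
  proof
    assume "n1 + 1 = s \<and> n2 = 1"
    then have "wall r d s e n1 n2 = wall r d (r - s) (int d - e) (r - s) 0"
      using wall_complement[OF s n] by simp
    moreover have "0 < r - s" "r - s < r" using s by auto
    ultimately show False
      using assms(5) not_diagonal_crossing_s_0[OF assms(3)] not_nearly_diagonal_crossing_s_0
      unfolding diagonal_crossing_def nearly_diagonal_crossing_def by metis
  qed
  ultimately show ?thesis using simple_wall_unless_s_0_or_dual[OF assms(4)] by blast
qed

end
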